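(* Let $G$ be a finite group acting (faithfully) on a finite set $M$ via $\circ$, and let $\mathcal H$ be a family of subgroups of $G$. Suppose $f:M\to S$ hides some $H\in\mathcal H$ by symmetries, i.e. $f(x)=f(y)\iff H\circ x=H\circ y$ for all $x,y\in M$. Let $B=\{m_1,\dots,m_t\}\subseteq M$ be an $\mathcal H$-strong base. Then the function $f_{\rm HSP}:G\to S^t$, $f_{\rm HSP}(g)=(f(g\circ m_1),\dots,f(g\circ m_t))$, hides $H$ in the sense of the hidden subgroup problem: for all $x,y\in G$, $f_{\rm HSP}(x)=f_{\rm HSP}(y)\iff Hx=Hy$.
   Context: For $m\in M$, $G_m=\{g\in G: g\circ m=m\}$ is the stabilizer of $m$. For $H\le G$, a set $B\subseteq M$ is an $H$-strong base if for every $g\in G$, $\bigcap_{m\in B} H\,G_{g\circ m}=H$ (here $HG_{m}=\{hk:h\in H,k\in G_m\}$). $B$ is an $\mathcal H$-strong base if it is an $H$-strong base for every $H\in\mathcal H$. *)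

theory Defs
  imports "HOL-Algebra.Group_Action"
begin

definition strong_base :: "('g, 'c) monoid_scheme \<Rightarrow> ('g \<Rightarrow> 'm \<Rightarrow> 'm) \<Rightarrow> 'g set \<Rightarrow> 'm set \<Rightarrow> bool" where
  "strong_base G \<phi> H B \<longleftrightarrow>
     (\<forall>g \<in> carrier G. (\<Inter>m \<in> B. H <#>\<^bsub>G\<^esub> stabilizer G \<phi> (\<phi> g m)) = H)"

definition family_strong_base :: "('g, 'c) monoid_scheme \<Rightarrow> ('g \<Rightarrow> 'm \<Rightarrow> 'm) \<Rightarrow> 'g set set \<Rightarrow> 'm set \<Rightarrow> bool" where
  "family_strong_base G \<phi> \<H> B \<longleftrightarrow> (\<forall>H \<in> \<H>. strong_base G \<phi> H B)"

definition hides_by_symmetries :: "('g, 'c) monoid_scheme \<Rightarrow> 'm set \<Rightarrow> ('g \<Rightarrow> 'm \<Rightarrow> 'm) \<Rightarrow> 'g set \<Rightarrow> ('m \<Rightarrow> 's) \<Rightarrow> bool" where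
  "hides_by_symmetries G M \<phi> H f \<longleftrightarrow>
     (\<forall>x \<in> M. \<forall>y \<in> M. f x = f y \<longleftrightarrow> (\<lambda>h. \<phi> h x) ` H = (\<lambda>h. \<phi> h y) ` H)"

end

theory Submission
  imports Defs
begin

text \<open>
  For a subgroup H acting on the points of M, write H \<circ> a for the H-orbit of a point a.
  The whole argument rests on one orbit criterion: for a point a and g \<in> G,
  H \<circ> a = H \<circ> (g \<circ> a)  holds exactly when  g \<in> H G_a.
  Given x, y \<in> G put g = y x\<inverse>, so that y \<circ> m = g \<circ> (x \<circ> m).  Since f hides H by
  symmetries, f(x \<circ> m) = f(y \<circ> m) for all base points m is equivalent to
  g \<in> H G_(x \<circ> m) for all m \<in> B, i.e. to g lying in the intersection, which the strong base
  property identifies with H; and g \<in> H is the coset criterion Hx = Hy.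
\<close>

lemma (in group) rcos_eq_iff:
  assumes "subgroup H G" and "x \<in> carrier G" and "y \<in> carrier G"
  shows "H #> x = H #> y \<longleftrightarrow> y \<otimes> inv x \<in> H"
  using repr_independenceD[OF assms(1,3)] repr_independence[OF _ assms(2,1)]
    subgroup.rcos_module[OF assms(1) is_group assms(2,3)] by blast

lemma (in group_action) acting_group: "group G"
  using group_hom by (rule group_hom.axioms(1))

lemma (in group_action) act_one:
  assumes "a \<in> E"
  shows "\<phi> \<one> a = a"
  using id_eq_one assms by (metis restrict_apply')

lemma (in group_action) subgroup_orbit_translate:
  assumes H: "subgroup H G" and h: "h \<in> H" and a: "a \<in> E"
  shows "(\<lambda>k. \<phi> k (\<phi> h a)) ` H = (\<lambda>k. \<phi> k a) ` H"
proof -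
  interpret group G by (rule acting_group)
  have hc: "h \<in> carrier G" using H h by (rule subgroup.mem_carrier)
  have act: "\<phi> k (\<phi> h a) = \<phi> (k \<otimes> h) a" if "k \<in> H" for k
    using composition_rule[OF a subgroup.mem_carrier[OF H that] hc] by simp
  have shift: "(\<lambda>k. k \<otimes> h) ` H = H"
    using coset_join2[OF hc H h] unfolding r_coset_def by (metis UNION_singleton_eq_range)
  have "(\<lambda>k. \<phi> k (\<phi> h a)) ` H = (\<lambda>k. \<phi> (k \<otimes> h) a) ` H"
    using act by (rule image_cong[OF refl])
  also have "\<dots> = (\<lambda>k. \<phi> k a) ` (\<lambda>k. k \<otimes> h) ` H" by (rule image_image[symmetric])
  also have "\<dots> = (\<lambda>k. \<phi> k a) ` H" by (simp only: shift)
  finally show ?thesis .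
qed

lemma (in group_action) subgroup_orbit_eq_iff:
  assumes H: "subgroup H G" and a: "a \<in> E" and g: "g \<in> carrier G"
  shows "(\<lambda>k. \<phi> k a) ` H = (\<lambda>k. \<phi> k (\<phi> g a)) ` H \<longleftrightarrow> g \<in> H <#> stabilizer G \<phi> a"
proof -
  interpret group G by (rule acting_group)
  show ?thesis
  proof
    assume orbit_eq: "(\<lambda>k. \<phi> k a) ` H = (\<lambda>k. \<phi> k (\<phi> g a)) ` H"
    have "\<phi> \<one> (\<phi> g a) = \<phi> g a" using act_one element_image[OF g a refl] by blast
    then have "\<phi> g a \<in> (\<lambda>k. \<phi> k (\<phi> g a)) ` H"
      using subgroup.one_closed[OF H] by (metis image_eqI)
    then obtain h where h: "h \<in> H" and gh: "\<phi> g a = \<phi> h a"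
      unfolding orbit_eq[symmetric] by blast
    have hc: "h \<in> carrier G" using H h by (rule subgroup.mem_carrier)
    have "\<phi> (inv h \<otimes> g) a = \<phi> (inv h) (\<phi> h a)"
      using composition_rule[OF a inv_closed[OF hc] g] gh by (simp only:)
    also have "\<dots> = \<phi> (inv h \<otimes> h) a"
      using composition_rule[OF a inv_closed[OF hc] hc] by (rule sym)
    also have "\<dots> = a" using act_one[OF a] l_inv[OF hc] by (simp only:)
    finally have "inv h \<otimes> g \<in> stabilizer G \<phi> a"
      unfolding stabilizer_def using hc g by blast
    moreover have "g = h \<otimes> (inv h \<otimes> g)"
      using hc g by (simp add: m_assoc[symmetric])
    ultimately show "g \<in> H <#> stabilizer G \<phi> a"
      unfolding set_mult_def using h by blast
  next
    assume "g \<in> H <#> stabilizer G \<phi> a"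
    then obtain h s where h: "h \<in> H" and s: "s \<in> stabilizer G \<phi> a" and gs: "g = h \<otimes> s"
      unfolding set_mult_def by blast
    have sc: "s \<in> carrier G" and sa: "\<phi> s a = a"
      using s unfolding stabilizer_def by blast+
    have "\<phi> g a = \<phi> h a"
      using composition_rule[OF a subgroup.mem_carrier[OF H h] sc] gs sa by simp
    then show "(\<lambda>k. \<phi> k a) ` H = (\<lambda>k. \<phi> k (\<phi> g a)) ` H"
      using subgroup_orbit_translate[OF H h a] by simp
  qed
qed

lemma (in group_action) strong_base_separates_cosets:
  assumes H: "subgroup H G"
    and hides: "hides_by_symmetries G E \<phi> H f"
    and base: "strong_base G \<phi> H B" and BE: "B \<subseteq> E"
    and x: "x \<in> carrier G" and y: "y \<in> carrier G"
  shows "(\<forall>m \<in> B. f (\<phi> x m) = f (\<phi> y m)) \<longleftrightarrow> H #> x = H #> y"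
proof -
  interpret group G by (rule acting_group)
  define g where "g = y \<otimes> inv x"
  have g: "g \<in> carrier G" unfolding g_def using x y by simp
  have gx: "g \<otimes> x = y" unfolding g_def using x y by (simp add: m_assoc)
  have f_eq_iff: "f (\<phi> x m) = f (\<phi> y m) \<longleftrightarrow> g \<in> H <#> stabilizer G \<phi> (\<phi> x m)"
    if "m \<in> B" for m
  proof -
    have m: "m \<in> E" using that BE by blast
    have xm: "\<phi> x m \<in> E" and ym: "\<phi> y m \<in> E"
      using element_image[OF x m refl] element_image[OF y m refl] .
    have y_via_g: "\<phi> y m = \<phi> g (\<phi> x m)"
      using composition_rule[OF m g x] gx by simp
    have "f (\<phi> x m) = f (\<phi> y m) \<longleftrightarrow> (\<lambda>k. \<phi> k (\<phi> x m)) ` H = (\<lambda>k. \<phi> k (\<phi> y m)) ` H"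
      using hides xm ym unfolding hides_by_symmetries_def by blast
    then show ?thesis unfolding y_via_g using subgroup_orbit_eq_iff[OF H xm g] by (rule trans)
  qed
  have "(\<forall>m \<in> B. f (\<phi> x m) = f (\<phi> y m)) \<longleftrightarrow> g \<in> (\<Inter>m \<in> B. H <#> stabilizer G \<phi> (\<phi> x m))"
    using f_eq_iff by blast
  also have "\<dots> \<longleftrightarrow> g \<in> H" using base x unfolding strong_base_def by blast
  also have "\<dots> \<longleftrightarrow> H #> x = H #> y" unfolding g_def using rcos_eq_iff[OF H x y] by (rule sym)
  finally show ?thesis .
qed

theorem lemma1:
  fixes G :: "('g, 'c) monoid_scheme" and M :: "'m set" and \<phi> :: "'g \<Rightarrow> 'm \<Rightarrow> 'm"
    and \<H> :: "'g set set" and H :: "'g set" and f :: "'m \<Rightarrow> 's" and ms :: "'m list"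
  assumes "group G" and "finite (carrier G)" and "finite M"
    and "faithful_action G M \<phi>"
    and "\<forall>K \<in> \<H>. subgroup K G"
    and "H \<in> \<H>"
    and "hides_by_symmetries G M \<phi> H f"
    and "distinct ms" and "set ms \<subseteq> M"
    and "family_strong_base G \<phi> \<H> (set ms)"
  shows "\<forall>x \<in> carrier G. \<forall>y \<in> carrier G.
           map (\<lambda>m. f (\<phi> x m)) ms = map (\<lambda>m. f (\<phi> y m)) ms \<longleftrightarrow> H #>\<^bsub>G\<^esub> x = H #>\<^bsub>G\<^esub> y"
proof (intro ballI)
  fix x y assume x: "x \<in> carrier G" and y: "y \<in> carrier G"
  interpret group_action G M \<phi>
    using assms(4) by (rule faithful_action.axioms(1))
  have H: "subgroup H G" using assms(5,6) by blast
  have base: "strong_base G \<phi> H (set ms)"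
    using assms(6,10) unfolding family_strong_base_def by blast
  have "map (\<lambda>m. f (\<phi> x m)) ms = map (\<lambda>m. f (\<phi> y m)) ms \<longleftrightarrow>
        (\<forall>m \<in> set ms. f (\<phi> x m) = f (\<phi> y m))"
    by (simp add: map_eq_conv)
  also have "\<dots> \<longleftrightarrow> H #>\<^bsub>G\<^esub> x = H #>\<^bsub>G\<^esub> y"
    using strong_base_separates_cosets[OF H assms(7) base assms(9) x y] .
  finally show "map (\<lambda>m. f (\<phi> x m)) ms = map (\<lambda>m. f (\<phi> y m)) ms \<longleftrightarrow> H #>\<^bsub>G\<^esub> x = H #>\<^bsub>G\<^esub> y" .
qed

end
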